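(* Let $G$ be a finite transitive permutation group and let $H,K\le G$ be subgroups such that $H\cup K$ is an intersecting set. Then $HK=\{hk: h\in H, k\in K\}$ is also an intersecting set.
   Context: For a permutation group $G$ on a finite set $V$, a subset $\mathcal{F}\subseteq G$ is intersecting if for all $g,h\in\mathcal{F}$ there is $v\in V$ with $g(v)=h(v)$. *)

theory Defs
  imports "HOL-Combinatorics.Permutations"
begin

definition perm_group :: "'a set \<Rightarrow> ('a \<Rightarrow> 'a) set \<Rightarrow> bool" where
  "perm_group V G \<longleftrightarrow> (\<forall>g\<in>G. g permutes V) \<and> id \<in> G \<and>
     (\<forall>g\<in>G. \<forall>h\<in>G. g \<circ> h \<in> G) \<and> (\<forall>g\<in>G. inv g \<in> G)"

definition perm_subgroup :: "('a \<Rightarrow> 'a) set \<Rightarrow> ('a \<Rightarrow> 'a) set \<Rightarrow> bool" where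
  "perm_subgroup H G \<longleftrightarrow> H \<subseteq> G \<and> id \<in> H \<and>
     (\<forall>g\<in>H. \<forall>h\<in>H. g \<circ> h \<in> H) \<and> (\<forall>g\<in>H. inv g \<in> H)"

definition transitive_on :: "'a set \<Rightarrow> ('a \<Rightarrow> 'a) set \<Rightarrow> bool" where
  "transitive_on V G \<longleftrightarrow> (\<forall>v\<in>V. \<forall>w\<in>V. \<exists>g\<in>G. g v = w)"

definition intersecting :: "'a set \<Rightarrow> ('a \<Rightarrow> 'a) set \<Rightarrow> bool" where
  "intersecting V F \<longleftrightarrow> (\<forall>g\<in>F. \<forall>h\<in>F. \<exists>v\<in>V. g v = h v)"

definition set_prod :: "('a \<Rightarrow> 'a) set \<Rightarrow> ('a \<Rightarrow> 'a) set \<Rightarrow> ('a \<Rightarrow> 'a) set" where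
  "set_prod H K = {h \<circ> k | h k. h \<in> H \<and> k \<in> K}"

end

theory Submission
  imports Defs
begin

text \<open>Given \<open>h\<^sub>1k\<^sub>1, h\<^sub>2k\<^sub>2 \<in> HK\<close>, the elements \<open>h\<^sub>1\<inverse>h\<^sub>2 \<in> H\<close> and
  \<open>k\<^sub>1k\<^sub>2\<inverse> \<in> K\<close> agree at some point \<open>w\<close>, since \<open>H \<union> K\<close> is intersecting.
  Rearranging \<open>k\<^sub>1k\<^sub>2\<inverse>(w) = h\<^sub>1\<inverse>h\<^sub>2(w)\<close> gives \<open>h\<^sub>1k\<^sub>1(v) = h\<^sub>2k\<^sub>2(v)\<close>
  for \<open>v = k\<^sub>2\<inverse>(w)\<close>.\<close>

lemma perm_subgroup_permutes:
  assumes "perm_group V G" "perm_subgroup H G" "h \<in> H"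
  shows "h permutes V"
  using assms unfolding perm_group_def perm_subgroup_def by blast

lemma perm_subgroup_inv_comp:
  assumes "perm_subgroup H G" "g \<in> H" "h \<in> H"
  shows "inv g \<circ> h \<in> H"
  using assms unfolding perm_subgroup_def by blast

lemma perm_subgroup_comp_inv:
  assumes "perm_subgroup H G" "g \<in> H" "h \<in> H"
  shows "g \<circ> inv h \<in> H"
  using assms unfolding perm_subgroup_def by blast

lemma comp_agree_at_inv_if_quotients_agree:
  assumes "surj h\<^sub>1" "surj k\<^sub>2" "(k\<^sub>1 \<circ> inv k\<^sub>2) w = (inv h\<^sub>1 \<circ> h\<^sub>2) w"
  shows "(h\<^sub>1 \<circ> k\<^sub>1) (inv k\<^sub>2 w) = (h\<^sub>2 \<circ> k\<^sub>2) (inv k\<^sub>2 w)"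
  using assms by (simp add: surj_f_inv_f)

lemma intersecting_set_prod:
  assumes G: "perm_group V G"
    and H: "perm_subgroup H G" and K: "perm_subgroup K G"
    and HK: "intersecting V (H \<union> K)"
  shows "intersecting V (set_prod H K)"
  unfolding intersecting_def
proof (intro ballI)
  fix f g assume "f \<in> set_prod H K" "g \<in> set_prod H K"
  then obtain h\<^sub>1 k\<^sub>1 h\<^sub>2 k\<^sub>2 where fg: "f = h\<^sub>1 \<circ> k\<^sub>1" "g = h\<^sub>2 \<circ> k\<^sub>2"
    and mem: "h\<^sub>1 \<in> H" "h\<^sub>2 \<in> H" "k\<^sub>1 \<in> K" "k\<^sub>2 \<in> K"
    unfolding set_prod_def by blast
  have "inv h\<^sub>1 \<circ> h\<^sub>2 \<in> H \<union> K" "k\<^sub>1 \<circ> inv k\<^sub>2 \<in> H \<union> K"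
    using perm_subgroup_inv_comp[OF H] perm_subgroup_comp_inv[OF K] mem by auto
  then obtain w where w: "w \<in> V" "(k\<^sub>1 \<circ> inv k\<^sub>2) w = (inv h\<^sub>1 \<circ> h\<^sub>2) w"
    using HK unfolding intersecting_def by blast
  have h\<^sub>1: "h\<^sub>1 permutes V" and k\<^sub>2: "k\<^sub>2 permutes V"
    using perm_subgroup_permutes[OF G] H K mem by auto
  have "inv k\<^sub>2 w \<in> V"
    using w(1) k\<^sub>2 by (simp add: permutes_inv permutes_in_image)
  moreover have "f (inv k\<^sub>2 w) = g (inv k\<^sub>2 w)"
    unfolding fg using comp_agree_at_inv_if_quotients_agree w(2) h\<^sub>1 k\<^sub>2
    by (metis permutes_surj)
  ultimately show "\<exists>v\<in>V. f v = g v" by blast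
qed

theorem lemma5p1:
  fixes V :: "'a set" and G H K :: "('a \<Rightarrow> 'a) set"
  assumes "finite V"
    and "perm_group V G"
    and "transitive_on V G"
    and "perm_subgroup H G"
    and "perm_subgroup K G"
    and "intersecting V (H \<union> K)"
  shows "intersecting V (set_prod H K)"
  using intersecting_set_prod assms(2,4-6) .

end
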